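(* Consider Phase-1 training with learning rate $\alpha>0$ on a fixed batch of size $N$, fix $a_\star\in(0,1]$ and let $T_\star := \min\{t:|a_t|\ge a_\star\}$. Let $q_\star := c_0/\sqrt N>0$. Assume $\mathrm{sign}(a_0) = \mathrm{sign}(q_0)$, $|q_0|\ge q_\star$, and $\alpha a_\star\|\widehat M\|_2\le\frac12$. Then \[ \|w_{T_\star} - w_0\|_2 \le \frac{8\|\widehat M\|_2}{q_\star}a_\star(a_\star - |a_0|)_+ + 4\alpha\|\widehat M\|_2 a_\star . \]
   Context: $\widehat M := \frac1N\sum_{s=1}^N y^{(s)}x^{(s)}x^{(s)\top}$ for samples $x^{(s)}\in\{\pm1\}^d$, $y^{(s)} = x^{(s)}_1x^{(s)}_2$. Phase-1 updates: $a_{t+1} = \mathrm{clip}_{[-1,1]}(a_t + \frac\alpha2 q_t)$, $w_{t+1} = \frac{w_t+\alpha a_t\widehat Mw_t}{\|w_t+\alpha a_t\widehat Mw_t\|_2}$, $q_t := w_t^\top\widehat Mw_t$, with $w_0$ a unit vector. $c_0>0$ is a constant. $(z)_+ = \max\{z,0\}$, and $\|\widehat M\|_2$ is the operator norm. *)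

theory Defs
  imports "HOL-Analysis.Analysis"
begin

definition outer :: "real^'d \<Rightarrow> real^'d \<Rightarrow> real^'d^'d" where
  "outer x z = (\<chi> i j. x $ i * z $ j)"

definition Mhat :: "nat \<Rightarrow> (nat \<Rightarrow> real^'d) \<Rightarrow> 'd \<Rightarrow> 'd \<Rightarrow> real^'d^'d" where
  "Mhat N X i1 i2 = (1 / real N) *\<^sub>R (\<Sum>s<N. ((X s $ i1) * (X s $ i2)) *\<^sub>R outer (X s) (X s))"

definition opnorm2 :: "real^'d^'d \<Rightarrow> real" where
  "opnorm2 M = onorm (\<lambda>v. M *v v)"

definition clip1 :: "real \<Rightarrow> real" where
  "clip1 z = max (-1) (min 1 z)"

definition posp :: "real \<Rightarrow> real" where
  "posp z = max z 0"

end

theory Submission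
  imports Defs
begin

text \<open>
  While \<open>|a\<^sub>t| < a\<^sub>\<star>\<close>, the step \<open>w \<mapsto> w + \<alpha> a\<^sub>t M w\<close> is a power-iteration step with the
  positive definite symmetric matrix \<open>I + \<alpha> a\<^sub>t M\<close>, and power iteration never decreases the
  Rayleigh quotient. Hence \<open>a\<^sub>t q\<^sub>t\<close> keeps the sign of \<open>a\<^sub>0 q\<^sub>0\<close>, \<open>|q\<^sub>t| \<ge> q\<^sub>\<star>\<close> persists, and
  \<open>|a\<^sub>t|\<close> grows by at least \<open>\<alpha> q\<^sub>\<star> / 2\<close> per step, so \<open>T\<^sub>\<star> - 1 \<le> 2 (a\<^sub>\<star> - |a\<^sub>0|) / (\<alpha> q\<^sub>\<star>)\<close>.
  Each normalised step moves \<open>w\<close> by at most \<open>2 \<alpha> a\<^sub>\<star> \<parallel>M\<parallel>\<close>; summing over \<open>T\<^sub>\<star>\<close> steps gives the bound.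
\<close>

lemma symmetric_operator_Cauchy_Schwarz:
  fixes g :: "'a::real_inner \<Rightarrow> 'a"
  assumes "linear g" and sym: "\<And>u v. g u \<bullet> v = u \<bullet> g v"
    and psd: "\<And>x. 0 \<le> x \<bullet> g x" and pos: "0 < v \<bullet> g v"
  shows "(u \<bullet> g v)\<^sup>2 \<le> (u \<bullet> g u) * (v \<bullet> g v)"
proof -
  define t where "t = u \<bullet> g v / (v \<bullet> g v)"
  have "0 \<le> (u - t *\<^sub>R v) \<bullet> g (u - t *\<^sub>R v)" by (rule psd)
  also have "\<dots> = u \<bullet> g u - 2 * t * (u \<bullet> g v) + t\<^sup>2 * (v \<bullet> g v)"
    using sym[of v u] \<open>linear g\<close>
    by (simp add: linear_diff linear_scale inner_diff_left inner_diff_right inner_commute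
        algebra_simps power2_eq_square)
  also have "\<dots> = u \<bullet> g u - (u \<bullet> g v)\<^sup>2 / (v \<bullet> g v)"
    using pos by (simp add: t_def field_simps power2_eq_square)
  finally show ?thesis using pos by (simp add: field_simps)
qed

lemma rayleigh_quotient_le_at_image:
  fixes g :: "'a::real_inner \<Rightarrow> 'a"
  assumes "linear g" and sym: "\<And>u v. g u \<bullet> v = u \<bullet> g v"
    and pd: "\<And>x. x \<noteq> 0 \<Longrightarrow> 0 < x \<bullet> g x" and "norm x = 1"
  shows "x \<bullet> g x \<le> sgn (g x) \<bullet> g (sgn (g x))"
proof -
  define y where "y = g x"
  have psd: "0 \<le> z \<bullet> g z" for z
    using pd[of z] by (cases "z = 0") (auto simp: linear_0[OF \<open>linear g\<close>])
  have "x \<noteq> 0" using \<open>norm x = 1\<close> by auto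
  then have xy_pos: "0 < x \<bullet> y" unfolding y_def by (rule pd)
  then have "y \<noteq> 0" by auto
  then have yy_pos: "0 < y \<bullet> y" and ygy_pos: "0 < y \<bullet> g y" using pd by auto
  have cs_g: "(y \<bullet> y)\<^sup>2 \<le> (x \<bullet> y) * (y \<bullet> g y)"
    using symmetric_operator_Cauchy_Schwarz[OF \<open>linear g\<close> sym psd ygy_pos, of x] sym[of x y]
    by (simp add: y_def)
  have cs: "(x \<bullet> y)\<^sup>2 \<le> y \<bullet> y"
    using Cauchy_Schwarz_ineq[of x y] \<open>norm x = 1\<close> by (simp add: dot_square_norm)
  have "(x \<bullet> y) * ((x \<bullet> y) * (y \<bullet> y)) = (x \<bullet> y)\<^sup>2 * (y \<bullet> y)"
    by (simp add: power2_eq_square)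
  also have "\<dots> \<le> (y \<bullet> y)\<^sup>2" using cs yy_pos by (simp add: power2_eq_square mult_right_mono)
  also have "\<dots> \<le> (x \<bullet> y) * (y \<bullet> g y)" by (rule cs_g)
  finally have "(x \<bullet> y) * ((x \<bullet> y) * (y \<bullet> y)) \<le> (x \<bullet> y) * (y \<bullet> g y)" .
  then have "x \<bullet> y \<le> (y \<bullet> g y) / (y \<bullet> y)"
    using xy_pos yy_pos by (simp add: mult_le_cancel_left_pos pos_le_divide_eq mult.commute)
  also have "(y \<bullet> g y) / (y \<bullet> y) = sgn y \<bullet> g (sgn y)"
    using \<open>linear g\<close> \<open>y \<noteq> 0\<close>
    by (simp add: sgn_div_norm linear_scale dot_square_norm power2_eq_square divide_inverse mult_ac)
  finally show ?thesis unfolding y_def .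
qed

lemma inner_power_step_ge:
  fixes f :: "'a::real_inner \<Rightarrow> 'a"
  assumes bound: "\<And>v. norm (f v) \<le> K * norm v" and "\<bar>\<eta>\<bar> * K \<le> 1 / 2"
  shows "(norm u)\<^sup>2 / 2 \<le> u \<bullet> (u + \<eta> *\<^sub>R f u)"
proof -
  have "\<bar>\<eta> * (u \<bullet> f u)\<bar> \<le> \<bar>\<eta>\<bar> * (norm u * (K * norm u))"
    using Cauchy_Schwarz_ineq2[of u "f u"] bound[of u]
    by (simp add: abs_mult mult_left_mono order_trans)
  also have "\<dots> = (\<bar>\<eta>\<bar> * K) * (norm u)\<^sup>2" by (simp add: power2_eq_square)
  also have "\<dots> \<le> 1 / 2 * (norm u)\<^sup>2" using assms(2) by (rule mult_right_mono) simp
  finally show ?thesis by (simp add: inner_add_right dot_square_norm)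
qed

lemma power_step_rayleigh_mono:
  fixes f :: "'a::real_inner \<Rightarrow> 'a"
  assumes "linear f" and sym: "\<And>u v. f u \<bullet> v = u \<bullet> f v"
    and bound: "\<And>v. norm (f v) \<le> K * norm v" and small: "\<bar>\<eta>\<bar> * K \<le> 1 / 2"
    and "norm w = 1"
  shows "\<eta> * (w \<bullet> f w) \<le> \<eta> * (sgn (w + \<eta> *\<^sub>R f w) \<bullet> f (sgn (w + \<eta> *\<^sub>R f w)))"
proof -
  define g where "g v = v + \<eta> *\<^sub>R f v" for v
  have "linear g"
    unfolding g_def by (intro linear_compose_add linear_ident linear_compose_scale_right \<open>linear f\<close>)
  have g_sym: "g u \<bullet> v = u \<bullet> g v" for u v
    unfolding g_def using sym[of u v] by (simp add: inner_add_left inner_add_right)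
  have g_pd: "0 < x \<bullet> g x" if "x \<noteq> 0" for x
  proof -
    have "0 < (norm x)\<^sup>2 / 2" using that by simp
    then show ?thesis using inner_power_step_ge[OF bound small, of x] unfolding g_def by linarith
  qed
  have unit_form: "u \<bullet> g u = 1 + \<eta> * (u \<bullet> f u)" if "norm u = 1" for u
    using that by (simp add: g_def inner_add_right dot_square_norm)
  have "0 < w \<bullet> g w" using \<open>norm w = 1\<close> by (intro g_pd) auto
  then have "g w \<noteq> 0" by auto
  then have "norm (sgn (g w)) = 1" by (simp add: norm_sgn)
  then show ?thesis
    using rayleigh_quotient_le_at_image[OF \<open>linear g\<close> g_sym g_pd \<open>norm w = 1\<close>]
      unit_form[of w] unit_form[of "sgn (g w)"] \<open>norm w = 1\<close>
    by (simp add: g_def)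
qed

lemma norm_sgn_add_diff_le:
  fixes w e :: "'a::real_normed_vector"
  assumes "norm w = 1"
  shows "norm (sgn (w + e) - w) \<le> 2 * norm e"
proof -
  let ?v = "w + e"
  have "norm (sgn ?v - ?v) \<le> \<bar>1 - norm ?v\<bar>"
  proof (cases "?v = 0")
    case False
    have "sgn ?v - ?v = (inverse (norm ?v) - 1) *\<^sub>R ?v" by (simp add: sgn_div_norm scaleR_diff_left)
    then have "norm (sgn ?v - ?v) = \<bar>(inverse (norm ?v) - 1) * norm ?v\<bar>" by (simp add: abs_mult)
    also have "\<dots> = \<bar>1 - norm ?v\<bar>" using False by (simp add: algebra_simps)
    finally show ?thesis by simp
  qed simp
  also have "\<bar>1 - norm ?v\<bar> \<le> norm e"
    using norm_triangle_ineq3[of ?v w] assms by (simp add: abs_minus_commute)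
  finally have "norm (sgn ?v - ?v) \<le> norm e" .
  then show ?thesis
    using norm_triangle_ineq[of "sgn ?v - ?v" "?v - w"] by simp
qed


locale phase1_dynamics =
  fixes f :: "'a::real_inner \<Rightarrow> 'a" and K \<alpha> :: real and a :: "nat \<Rightarrow> real" and w :: "nat \<Rightarrow> 'a"
  assumes linear: "linear f"
    and symmetric: "\<And>u v. f u \<bullet> v = u \<bullet> f v"
    and bounded: "\<And>v. norm (f v) \<le> K * norm v"
    and rate_pos: "0 < \<alpha>"
    and a_Suc: "\<And>t. a (Suc t) = clip1 (a t + \<alpha> / 2 * (w t \<bullet> f (w t)))"
    and w_Suc: "\<And>t. w (Suc t) = sgn (w t + (\<alpha> * a t) *\<^sub>R f (w t))"
    and norm_w_0: "norm (w 0) = 1"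
begin

definition q :: "nat \<Rightarrow> real" where
  "q t = w t \<bullet> f (w t)"

lemma K_nonneg: "0 \<le> K"
  using bounded[of "w 0"] norm_w_0 by (metis mult.right_neutral norm_ge_zero order_trans)

end

locale phase1_before_hitting = phase1_dynamics +
  fixes a_star :: real and T :: nat
  assumes a_star_le_1: "a_star \<le> 1"
    and small_rate: "\<alpha> * a_star * K \<le> 1 / 2"
    and below_before_T: "\<And>t. t < T \<Longrightarrow> \<bar>a t\<bar> < a_star"
begin

lemma small_effective_rate: "t < T \<Longrightarrow> \<bar>\<alpha> * a t\<bar> * K \<le> 1 / 2"
proof -
  assume "t < T"
  then have "\<bar>\<alpha> * a t\<bar> * K \<le> \<alpha> * a_star * K"
    using below_before_T[of t] rate_pos K_nonneg by (simp add: abs_mult mult_right_mono)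
  with small_rate show ?thesis by linarith
qed

lemma norm_w: "t \<le> T \<Longrightarrow> norm (w t) = 1"
proof (induction t)
  case (Suc t)
  then have "t < T" and unit: "norm (w t) = 1" by auto
  have "1 / 2 \<le> w t \<bullet> (w t + (\<alpha> * a t) *\<^sub>R f (w t))"
    using inner_power_step_ge[OF bounded small_effective_rate[OF \<open>t < T\<close>], of "w t"] unit by simp
  then have "w t + (\<alpha> * a t) *\<^sub>R f (w t) \<noteq> 0" by auto
  then show ?case by (simp add: w_Suc norm_sgn)
qed (simp add: norm_w_0)

lemma a_mult_q_increment_nonneg: "t < T \<Longrightarrow> 0 \<le> a t * (q (Suc t) - q t)"
proof -
  assume "t < T"
  with power_step_rayleigh_mono[OF linear symmetric bounded small_effective_rate norm_w]
  have "\<alpha> * (a t * q t) \<le> \<alpha> * (a t * q (Suc t))"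
    by (simp add: q_def w_Suc mult.assoc)
  with rate_pos show ?thesis by (simp add: algebra_simps)
qed

lemma a_Suc_unclipped: "Suc t < T \<Longrightarrow> a (Suc t) = a t + \<alpha> / 2 * q t"
  using below_before_T[of "Suc t"] a_star_le_1
  by (auto simp: a_Suc q_def clip1_def)

lemma norm_w_Suc_diff_le: "t < T \<Longrightarrow> norm (w (Suc t) - w t) \<le> 2 * \<alpha> * a_star * K"
proof -
  assume "t < T"
  then have unit: "norm (w t) = 1" by (simp add: norm_w)
  have "norm (w (Suc t) - w t) \<le> 2 * norm ((\<alpha> * a t) *\<^sub>R f (w t))"
    unfolding w_Suc using norm_sgn_add_diff_le[OF unit] .
  also have "\<dots> = 2 * (\<alpha> * \<bar>a t\<bar>) * norm (f (w t))" using rate_pos by (simp add: abs_mult)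
  also have "\<dots> \<le> 2 * (\<alpha> * a_star) * K"
    using below_before_T[OF \<open>t < T\<close>] bounded[of "w t"] unit rate_pos K_nonneg
    by (intro mult_mono mult_left_mono) auto
  finally show ?thesis by (simp add: mult.assoc)
qed

lemma norm_w_diff_le: "norm (w T - w 0) \<le> real T * (2 * \<alpha> * a_star * K)"
proof -
  have "norm (w T - w 0) = norm (\<Sum>t<T. w (Suc t) - w t)" by (simp add: sum_lessThan_telescope)
  also have "\<dots> \<le> (\<Sum>t<T. norm (w (Suc t) - w t))" by (rule norm_sum)
  also have "\<dots> \<le> (\<Sum>t<T. 2 * \<alpha> * a_star * K)" by (rule sum_mono) (simp add: norm_w_Suc_diff_le)
  finally show ?thesis by simp
qed

context
  fixes q_star :: real
  assumes sgn_a_0: "sgn (a 0) = sgn (q 0)" and q_star_pos: "0 < q_star"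
    and q_0_ge: "q_star \<le> \<bar>q 0\<bar>"
begin

lemma aligned_growth:
  "t < T \<Longrightarrow> q_star \<le> sgn (a 0) * q t \<and> \<bar>a 0\<bar> + real t * (\<alpha> * q_star / 2) \<le> sgn (a 0) * a t"
proof (induction t)
  case 0
  have "sgn (a 0) * q 0 = \<bar>q 0\<bar>" using sgn_a_0 by (simp add: sgn_real_def)
  moreover have "sgn (a 0) * a 0 = \<bar>a 0\<bar>" by (simp add: sgn_real_def)
  ultimately show ?case using q_0_ge by simp
next
  case (Suc t)
  let ?s = "sgn (a 0)"
  have "a 0 \<noteq> 0" using sgn_a_0 q_0_ge q_star_pos by (auto simp: sgn_0_0)
  then have s_sq: "?s * ?s = 1" by (simp add: sgn_real_def)
  from Suc have q_t: "q_star \<le> ?s * q t" and a_t: "\<bar>a 0\<bar> + real t * (\<alpha> * q_star / 2) \<le> ?s * a t"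
    by auto
  have "0 \<le> real t * (\<alpha> * q_star / 2)" using rate_pos q_star_pos by simp
  have reassoc: "(?s * a t) * (?s * (q (Suc t) - q t)) = (?s * ?s) * (a t * (q (Suc t) - q t))"
    by (simp only: mult.assoc mult.left_commute)
  have "0 < ?s * a t" using a_t \<open>a 0 \<noteq> 0\<close> \<open>0 \<le> real t * (\<alpha> * q_star / 2)\<close> by linarith
  moreover have "0 \<le> (?s * a t) * (?s * (q (Suc t) - q t))"
    unfolding reassoc s_sq using a_mult_q_increment_nonneg[of t] Suc.prems by simp
  ultimately have "0 \<le> ?s * (q (Suc t) - q t)" by (simp add: zero_le_mult_iff)
  then have "?s * q t \<le> ?s * q (Suc t)" by (simp add: right_diff_distrib)
  moreover have "?s * a (Suc t) = ?s * a t + \<alpha> / 2 * (?s * q t)"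
    using a_Suc_unclipped[OF Suc.prems] by (simp add: algebra_simps)
  moreover have "\<alpha> / 2 * q_star \<le> \<alpha> / 2 * (?s * q t)" using q_t rate_pos by simp
  moreover have "real (Suc t) * (\<alpha> * q_star / 2) = real t * (\<alpha> * q_star / 2) + \<alpha> / 2 * q_star"
    by (simp add: algebra_simps)
  ultimately show ?case using q_t a_t by linarith
qed

lemma hitting_time_bound: "T = Suc m \<Longrightarrow> real m * (\<alpha> * q_star / 2) \<le> a_star - \<bar>a 0\<bar>"
proof -
  assume "T = Suc m"
  then have "\<bar>a 0\<bar> + real m * (\<alpha> * q_star / 2) \<le> sgn (a 0) * a m" and "\<bar>a m\<bar> < a_star"
    using aligned_growth[of m] below_before_T[of m] by auto
  moreover have "sgn (a 0) * a m \<le> \<bar>a m\<bar>"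
    by (auto simp: sgn_real_def)
  ultimately show ?thesis by linarith
qed

lemma displacement_bound:
  assumes "0 < a_star"
  shows "norm (w T - w 0) \<le> 8 * K / q_star * a_star * posp (a_star - \<bar>a 0\<bar>) + 4 * \<alpha> * K * a_star"
proof (cases T)
  case 0
  then show ?thesis
    using assms K_nonneg q_star_pos rate_pos by (simp add: posp_def)
next
  case (Suc m)
  have gap: "0 \<le> a_star - \<bar>a 0\<bar>" using below_before_T[of 0] Suc by simp
  then have posp_gap: "posp (a_star - \<bar>a 0\<bar>) = a_star - \<bar>a 0\<bar>" by (simp add: posp_def)
  have nonneg: "0 \<le> K / q_star * a_star * (a_star - \<bar>a 0\<bar>)"
    using gap q_star_pos K_nonneg assms by simp
  have "real m * (2 * \<alpha> * a_star * K) = (real m * (\<alpha> * q_star / 2)) * (4 * a_star * K / q_star)"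
    using q_star_pos by (simp add: field_simps)
  also have "\<dots> \<le> (a_star - \<bar>a 0\<bar>) * (4 * a_star * K / q_star)"
    using hitting_time_bound[OF Suc] q_star_pos K_nonneg assms by (intro mult_right_mono) auto
  also have "\<dots> = 4 * (K / q_star * a_star * (a_star - \<bar>a 0\<bar>))" by (simp add: algebra_simps)
  also have "\<dots> \<le> 8 * K / q_star * a_star * posp (a_star - \<bar>a 0\<bar>)"
    using nonneg by (simp add: posp_gap)
  finally have "real T * (2 * \<alpha> * a_star * K)
      \<le> 8 * K / q_star * a_star * posp (a_star - \<bar>a 0\<bar>) + 2 * \<alpha> * a_star * K"
    using Suc by (simp add: algebra_simps)
  also have "2 * \<alpha> * a_star * K \<le> 4 * \<alpha> * K * a_star"
    using assms rate_pos K_nonneg by simp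
  finally show ?thesis using norm_w_diff_le by linarith
qed

end

end

lemma norm_matrix_vector_mult_le_opnorm2: "norm (M *v v) \<le> opnorm2 M * norm v"
  unfolding opnorm2_def by (rule onorm[OF matrix_vector_mul_bounded_linear])

lemma symmetric_matrix_inner_commute:
  fixes M :: "real^'n^'n"
  assumes "transpose M = M"
  shows "(M *v u) \<bullet> v = u \<bullet> (M *v v)"
  by (metis assms dot_lmul_matrix transpose_matrix_vector)

lemma transpose_Mhat: "transpose (Mhat N X i1 i2) = Mhat N X i1 i2"
  by (simp add: transpose_def Mhat_def outer_def vec_eq_iff mult.commute mult.left_commute)

theorem lemma11:
  fixes N :: nat and X :: "nat \<Rightarrow> real^'d" and i1 i2 :: 'd
    and \<alpha> a_star c0 :: real and a :: "nat \<Rightarrow> real" and w :: "nat \<Rightarrow> real^'d"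
  assumes "i1 \<noteq> i2"
    and "N \<ge> 1"
    and "\<And>s i. s < N \<Longrightarrow> X s $ i = 1 \<or> X s $ i = -1"
    and "\<alpha> > 0" and "c0 > 0"
    and "0 < a_star" and "a_star \<le> 1"
    and "norm (w 0) = 1"
    and "\<And>t. a (Suc t) = clip1 (a t + \<alpha> / 2 * (w t \<bullet> (Mhat N X i1 i2 *v w t)))"
    and "\<And>t. w (Suc t) = (1 / norm (w t + (\<alpha> * a t) *\<^sub>R (Mhat N X i1 i2 *v w t)))
                          *\<^sub>R (w t + (\<alpha> * a t) *\<^sub>R (Mhat N X i1 i2 *v w t))"
    and "\<exists>t. \<bar>a t\<bar> \<ge> a_star"
    and "sgn (a 0) = sgn (w 0 \<bullet> (Mhat N X i1 i2 *v w 0))"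
    and "\<bar>w 0 \<bullet> (Mhat N X i1 i2 *v w 0)\<bar> \<ge> c0 / sqrt (real N)"
    and "\<alpha> * a_star * opnorm2 (Mhat N X i1 i2) \<le> 1 / 2"
  shows "norm (w (LEAST t. \<bar>a t\<bar> \<ge> a_star) - w 0)
         \<le> 8 * opnorm2 (Mhat N X i1 i2) / (c0 / sqrt (real N)) * a_star * posp (a_star - \<bar>a 0\<bar>)
           + 4 * \<alpha> * opnorm2 (Mhat N X i1 i2) * a_star"
proof -
  let ?M = "Mhat N X i1 i2"
  define T where "T = (LEAST t. \<bar>a t\<bar> \<ge> a_star)"
  interpret phase1_before_hitting "(*v) ?M" "opnorm2 ?M" \<alpha> a w a_star T
  proof unfold_locales
    show "w (Suc t) = sgn (w t + (\<alpha> * a t) *\<^sub>R (?M *v w t))" for t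
      using assms(10)[of t] by (simp add: sgn_div_norm divide_inverse)
    show "\<bar>a t\<bar> < a_star" if "t < T" for t
      using not_less_Least[OF that[unfolded T_def]] by simp
  qed (use assms(4,7-9,14) in \<open>auto simp: matrix_vector_right_distrib matrix_vector_mult_scaleR norm_matrix_vector_mult_le_opnorm2
         symmetric_matrix_inner_commute[OF transpose_Mhat]\<close>)
  have "0 < c0 / sqrt (real N)" using assms(2,5) by simp
  moreover have "q 0 = w 0 \<bullet> (?M *v w 0)" by (simp add: q_def)
  ultimately show ?thesis
    using displacement_bound[of "c0 / sqrt (real N)"] assms(6,12,13) by (simp add: T_def)
qed

end
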